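(* Let $G$ be a finite graph of maximum degree $\Delta$, $\mathcal F\subseteq\mathcal F_1$ finite, $\pi\colon V(G)\to\mathcal F$, and $r_1=\max\{1,r(\mathcal F)\}$. Then for every $z\in\mathbb C$ with $|z|\le\big(\Delta e^{2}r_1(r_1+1)\big)^{-1}$ we have $Z_{\mathcal F}(G,\pi,z)\neq0$ and the Taylor series of $\log Z_{\mathcal F}(G,\pi,z)$ in $z$ about $0$ converges absolutely at $z$.
   Context: Boolean signatures: $f\colon\{0,1\}^d\to\mathbb C$. $\mathcal F_1=\{f\mid f(\mathbf0)=1\}$; $r(f)=\max_{x\in\{0,1\}^d\setminus\{\mathbf0\}}|f(x)|$ and $r(\mathcal F)=\max_{f\in\mathcal F}r(f)$. For a finite graph $G=(V,E)$ with a fixed order on $E$, $E(v)$ is the set of edges at $v$, $\pi$ assigns to $v$ a signature $f_v$ of arity $|E(v)|$, and $\sigma|_{E(v)}$ is the restriction of $\sigma\in\{0,1\}^E$ to $E(v)$. The (univariate) Boolean Holant polynomial is $Z_{\mathcal F}(G,\pi,z)=\sum_{\sigma\in\{0,1\}^E}\prod_{v\in V}f_v(\sigma|_{E(v)})\,z^{|\{e:\sigma(e)=1\}|}$; it has constant term $1$. *)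

theory Defs
  imports "HOL-Analysis.Analysis"
begin

text \<open>A Boolean signature is a pair (d, f) of an arity d and a function f on
  Boolean tuples; only the values of f on lists of length d matter.\<close>
type_synonym sig = "nat \<times> (bool list \<Rightarrow> complex)"

definition sig_arity :: "sig \<Rightarrow> nat" where "sig_arity s = fst s"
definition sig_fun :: "sig \<Rightarrow> bool list \<Rightarrow> complex" where "sig_fun s = snd s"

definition in_F1 :: "sig \<Rightarrow> bool" where
  "in_F1 s \<longleftrightarrow> sig_fun s (replicate (sig_arity s) False) = 1"

text \<open>r(f) = max over nonzero inputs of |f(x)| (0 for arity 0, an empty max).\<close>
definition sig_r :: "sig \<Rightarrow> real" where
  "sig_r s = Max (insert 0 {cmod (sig_fun s x) | x. length x = sig_arity s
                     \<and> x \<noteq> replicate (sig_arity s) False})"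

definition fam_r :: "sig set \<Rightarrow> real" where
  "fam_r F = Max (insert 0 (sig_r ` F))"

text \<open>Loopless multigraph: vertex set V, edge set E (edges linearly ordered by
  the type's order), endpoints ends e, a 2-element subset of V.\<close>
definition is_graph :: "'v set \<Rightarrow> ('e::linorder) set \<Rightarrow> ('e \<Rightarrow> 'v set) \<Rightarrow> bool" where
  "is_graph V E ends \<longleftrightarrow> finite V \<and> finite E \<and> (\<forall>e\<in>E. ends e \<subseteq> V \<and> card (ends e) = 2)"

definition edges_at :: "('e::linorder) set \<Rightarrow> ('e \<Rightarrow> 'v set) \<Rightarrow> 'v \<Rightarrow> 'e set" where
  "edges_at E ends v = {e\<in>E. v \<in> ends e}"

definition max_degree :: "'v set \<Rightarrow> ('e::linorder) set \<Rightarrow> ('e \<Rightarrow> 'v set) \<Rightarrow> nat" where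
  "max_degree V E ends = Max (insert 0 ((\<lambda>v. card (edges_at E ends v)) ` V))"

text \<open>Univariate Boolean Holant polynomial. sigma|_{E(v)} is the tuple of values of
  sigma on E(v), listed in the fixed edge order.\<close>
definition holant_Z :: "'v set \<Rightarrow> ('e::linorder) set \<Rightarrow> ('e \<Rightarrow> 'v set) \<Rightarrow> ('v \<Rightarrow> sig)
     \<Rightarrow> complex \<Rightarrow> complex" where
  "holant_Z V E ends \<pi> z =
     (\<Sum>\<sigma>\<in>PiE E (\<lambda>_. UNIV).
        (\<Prod>v\<in>V. sig_fun (\<pi> v) (map \<sigma> (sorted_list_of_set (edges_at E ends v))))
        * z ^ card {e\<in>E. \<sigma> e})"

definition log_taylor_coeff :: "(complex \<Rightarrow> complex) \<Rightarrow> nat \<Rightarrow> complex" where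
  "log_taylor_coeff f n = (deriv ^^ n) (\<lambda>w. Ln (f w)) 0 / fact n"

end

(* Write Z_A(w) for the Holant sum restricted to edge subsets of A.  An edge subset containing
   e = {u, u'} splits uniquely into its connected part C at u and a remainder avoiding every edge
   that touches C, so  Z_A = Z_{A-e} + (SUM C. W(C) * Z_{A - N(C)}).  By induction on |A| one shows
   Z_A \<noteq> 0 and |Z_{A-e}| \<le> e^{1/\<Delta>} |Z_A|: the ratio bound, applied to the edges of N(C), controls
   each cluster term by e^{-1/\<Delta>} y^|C| \<rho>^|V(C)| |Z_{A-e}|, and these tree-like weights sum to at
   most y B^2, where B satisfies \<rho> (1 + y B)^\<Delta> \<le> B.  Hence Z has no zero on the closed disc of
   the theorem, so none on a slightly larger open disc, where log Z has a holomorphic branch whose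
   Taylor series converges absolutely at z. *)

theory Submission
  imports Defs "HOL-Complex_Analysis.Complex_Analysis"
begin

section \<open>Taylor series of logarithms\<close>

lemma eventually_eq_if_exp_eq:
  fixes f g :: "'a::t2_space \<Rightarrow> complex"
  assumes "isCont f a" "isCont g a" "f a = g a"
    and "eventually (\<lambda>x. exp (f x) = exp (g x)) (nhds a)"
  shows "eventually (\<lambda>x. f x = g x) (nhds a)"
proof -
  have "isCont (\<lambda>x. f x - g x) a" using assms(1,2) by (intro continuous_intros)
  then have "eventually (\<lambda>x. dist (f x - g x) 0 < 2 * pi) (at a)"
    using assms(3) by (auto simp: isCont_def tendsto_iff)
  then have small: "eventually (\<lambda>x. cmod (f x - g x) < 2 * pi) (nhds a)"
    using assms(3) by (simp add: eventually_nhds_conv_at)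
  show ?thesis
    using small assms(4)
  proof eventually_elim
    case (elim x)
    then have "exp (f x - g x) = 1" by (simp add: exp_diff)
    then obtain n :: int where re: "Re (f x - g x) = 0" and im: "Im (f x - g x) = of_int (2 * n) * pi"
      using exp_eq_1 by blast
    have "\<bar>of_int (2 * n) * pi\<bar> < 2 * pi"
      using elim(1) abs_Im_le_cmod[of "f x - g x"] im by linarith
    then have "n = 0" by (simp add: abs_mult)
    then show "f x = g x" using re im by (simp add: complex_eq_iff)
  qed
qed

lemma summable_taylor_Ln_comp:
  fixes f :: "complex \<Rightarrow> complex"
  assumes hol: "f holomorphic_on ball 0 R" and f0: "f 0 = 1"
    and nz: "\<And>w. w \<in> ball 0 R \<Longrightarrow> f w \<noteq> 0" and z: "cmod z < R"
  shows "summable (\<lambda>n. cmod ((deriv ^^ n) (\<lambda>w. Ln (f w)) 0 / fact n * z ^ n))"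
proof -
  have "R > 0" using z norm_ge_zero[of z] by linarith
  then have R0: "0 \<in> ball 0 R" by simp
  obtain g where g: "g holomorphic_on ball 0 R" "\<And>w. w \<in> ball 0 R \<Longrightarrow> exp (g w) = f w"
    using holomorphic_logarithm_exists[OF convex_ball open_ball hol nz R0] by blast
  define g0 where "g0 w = g w - g 0" for w
  have g0_hol: "g0 holomorphic_on ball 0 R" unfolding g0_def by (intro holomorphic_intros g(1))
  have g0_exp: "exp (g0 w) = f w" if "w \<in> ball 0 R" for w
    using g(2)[OF that] g(2)[OF R0] f0 by (simp add: g0_def exp_diff)
  have "isCont f 0" "isCont g0 0"
    using hol g0_hol R0 continuous_on_eq_continuous_at[OF open_ball]
    by (meson holomorphic_on_imp_continuous_on)+
  then have cont_Ln: "isCont (\<lambda>w. Ln (f w)) 0"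
    using f0 by (intro continuous_intros) (auto simp: complex_nonpos_Reals_iff)
  have "eventually (\<lambda>w. w \<in> ball 0 R) (nhds 0)"
    using R0 by (intro eventually_nhds_in_open) auto
  \<comment> \<open>Near 0 the principal branch agrees with the logarithm defined on the whole ball.\<close>
  then have "eventually (\<lambda>w. exp (Ln (f w)) = exp (g0 w)) (nhds 0)"
  proof eventually_elim
    case (elim w)
    then show ?case using nz[OF elim] g0_exp[OF elim] by simp
  qed
  then have "eventually (\<lambda>w. Ln (f w) = g0 w) (nhds 0)"
    using f0 by (intro eventually_eq_if_exp_eq[OF cont_Ln \<open>isCont g0 0\<close>]) (simp_all add: g0_def)
  then have coeff: "(deriv ^^ n) (\<lambda>w. Ln (f w)) 0 = (deriv ^^ n) g0 0" for n
    by (rule higher_deriv_cong_ev) simp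
  define r where "r = (cmod z + R) / 2"
  have r: "0 \<le> r" "cmod z < r" "r < R" using z \<open>R > 0\<close> unfolding r_def by (auto intro!: add_nonneg_nonneg)
  then have "of_real r \<in> ball (0::complex) R" by simp
  from holomorphic_power_series[OF g0_hol this]
  have "summable (\<lambda>n. (deriv ^^ n) g0 0 / fact n * (of_real r) ^ n)"
    by (simp add: sums_summable)
  from powser_insidea[OF this] r show ?thesis by (simp add: coeff)
qed

lemma nonzero_on_larger_ball:
  fixes f :: "'a::{heine_borel,real_normed_vector} \<Rightarrow> 'b::{real_normed_vector}"
  assumes "continuous_on UNIV f" and "\<And>w. w \<in> cball 0 r \<Longrightarrow> f w \<noteq> 0"
  obtains R where "r < R" and "\<And>w. w \<in> ball 0 R \<Longrightarrow> f w \<noteq> 0"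
proof (cases "{w. f w = 0} = {}")
  case True
  then show ?thesis using that[of "r + 1"] by auto
next
  case False
  have "closed {w. f w = 0}" using assms(1) by (intro closed_Collect_eq) auto
  then obtain x where x: "x \<in> {w. f w = 0}"
    and min: "\<And>w. w \<in> {w. f w = 0} \<Longrightarrow> dist 0 x \<le> dist 0 w"
    using distance_attains_inf[of _ 0] False by blast
  have "r < norm x" using assms(2)[of x] x by (meson mem_Collect_eq mem_cball_0 not_le)
  moreover have "f w \<noteq> 0" if "w \<in> ball 0 (norm x)" for w
    using min[of w] that by auto
  ultimately show ?thesis by (rule that)
qed

lemma summable_log_taylor_coeff:
  fixes f :: "complex \<Rightarrow> complex"
  assumes hol: "f holomorphic_on UNIV" and f0: "f 0 = 1"
    and nz: "\<And>w. cmod w \<le> cmod z \<Longrightarrow> f w \<noteq> 0"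
  shows "summable (\<lambda>n. cmod (log_taylor_coeff f n * z ^ n))"
proof -
  have "continuous_on UNIV f" using hol by (rule holomorphic_on_imp_continuous_on)
  then obtain R where "cmod z < R" "\<And>w. w \<in> ball 0 R \<Longrightarrow> f w \<noteq> 0"
    using nonzero_on_larger_ball[of f "cmod z"] nz by auto
  then show ?thesis unfolding log_taylor_coeff_def
    using summable_taylor_Ln_comp[OF holomorphic_on_subset[OF hol] f0] by blast
qed

section \<open>Numerical constants\<close>

lemma exp_one_ge_8_div_3: "exp (1::real) \<ge> 8/3"
proof -
  have "1 + 1/3 + (1/3)^2/2 \<le> exp (1/3::real)" by (rule exp_lower_Taylor_quadratic) simp
  then have "(25/18::real)^3 \<le> exp (1/3) ^ 3" by (intro power_mono) (auto simp: power2_eq_square)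
  also have "exp (1/3::real) ^ 3 = exp 1" by (simp flip: exp_of_nat_mult)
  finally show ?thesis by (simp add: power3_eq_cube)
qed

lemma exp_two_mult_div_e_le:
  fixes b :: real
  assumes b: "0 < b" "b \<le> 1/3"
  shows "exp (2 * b / exp 1) \<le> 1 + b"
proof -
  define c where "c = 2 * b / exp 1"
  have "2 * (1 + b) \<le> exp 1" using b exp_one_ge_8_div_3 by (simp add: algebra_simps)
  then have "b * (2 * (1 + b)) \<le> b * exp 1" using b by (intro mult_left_mono) auto
  then have cb: "c * (1 + b) \<le> b" by (simp add: c_def field_simps)
  have "c < 1"
  proof (rule ccontr)
    assume "\<not> c < 1"
    then have "1 + b \<le> c * (1 + b)" using b mult_right_mono[of 1 c "1 + b"] by simp
    then show False using cb b by linarith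
  qed
  have "1 - c \<le> exp (- c)" using exp_ge_add_one_self[of "- c"] by simp
  then have "exp c * (1 - c) \<le> 1" by (simp add: exp_minus field_simps)
  then have "exp c \<le> 1 / (1 - c)" using \<open>c < 1\<close> by (simp add: field_simps)
  also have "\<dots> \<le> 1 + b" using cb \<open>c < 1\<close> by (simp add: field_simps)
  finally show ?thesis by (simp add: c_def)
qed

text \<open>Here x stands for |z| and r for r_1.\<close>

locale activity_bound =
  fixes x r :: real and \<Delta> :: nat
  assumes degree_pos: "\<Delta> \<ge> 1" and r_ge_1: "r \<ge> 1" and x_nonneg: "x \<ge> 0"
    and x_small: "x * (real \<Delta> * exp 2 * r * (r + 1)) \<le> 1"
begin

definition t :: real where "t = 1 / real \<Delta>"
definition y :: real where "y = x * exp (- t)"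
definition \<rho> :: real where "\<rho> = r * exp 1"
definition M :: real where "M = (2 * r + 2) / (2 * r + 1)"
definition B :: real where "B = \<rho> * M"

lemma t_pos: "t > 0"
  using degree_pos by (simp add: t_def)

lemma y_nonneg: "y \<ge> 0"
  using x_nonneg by (simp add: y_def)

lemma rho_ge_1: "\<rho> \<ge> 1"
proof -
  have "(1::real) * 1 \<le> r * exp 1" using r_ge_1 by (intro mult_mono) auto
  then show ?thesis by (simp add: \<rho>_def)
qed

lemma B_nonneg: "B \<ge> 0"
  using r_ge_1 rho_ge_1 by (simp add: B_def M_def)

lemma x_rho_small: "x * \<rho> * (real \<Delta> * exp 1 * (r + 1)) \<le> 1"
proof -
  have "exp (2::real) = exp 1 * exp 1" by (simp flip: exp_add)
  then show ?thesis using x_small by (simp add: \<rho>_def mult_ac)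
qed

lemma y_B_le: "y * B \<le> x * \<rho> * M"
proof -
  have "y \<le> x" using x_nonneg t_pos by (simp add: y_def mult_left_le)
  then have "y * B \<le> x * B" using B_nonneg by (rule mult_right_mono)
  then show ?thesis by (simp add: B_def mult.assoc)
qed

lemma B_fixed_point: "\<rho> * (1 + y * B) ^ \<Delta> \<le> B"
proof -
  define b where "b = 1 / (2 * r + 1)"
  have b: "0 < b" "b \<le> 1/3" using r_ge_1 by (auto simp: b_def field_simps)
  have "exp 1 * (r + 1) > 0" using r_ge_1 by simp
  then have "real \<Delta> * (x * \<rho>) \<le> 1 / (exp 1 * (r + 1))"
    using x_rho_small by (simp add: pos_le_divide_eq mult_ac)
  have "real \<Delta> * (y * B) \<le> real \<Delta> * (x * \<rho> * M)" using y_B_le by (intro mult_left_mono) auto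
  also have "\<dots> = real \<Delta> * (x * \<rho>) * M" by (simp add: mult_ac)
  also have "\<dots> \<le> 1 / (exp 1 * (r + 1)) * M"
    using \<open>real \<Delta> * (x * \<rho>) \<le> 1 / (exp 1 * (r + 1))\<close> r_ge_1
    by (intro mult_right_mono) (simp_all add: M_def)
  also have "\<dots> = 2 * b / exp 1" using r_ge_1 by (simp add: b_def M_def divide_simps)
  finally have "real \<Delta> * (y * B) \<le> 2 * b / exp 1" .
  have "(1 + y * B) ^ \<Delta> \<le> exp (y * B) ^ \<Delta>"
    using y_nonneg B_nonneg by (intro power_mono) auto
  also have "\<dots> = exp (real \<Delta> * (y * B))" by (simp add: exp_of_nat_mult)
  also have "\<dots> \<le> exp (2 * b / exp 1)" using \<open>real \<Delta> * (y * B) \<le> 2 * b / exp 1\<close> by simp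
  also have "\<dots> \<le> 1 + b" using b by (rule exp_two_mult_div_e_le)
  also have "1 + b = M" using r_ge_1 by (simp add: b_def M_def divide_simps)
  finally show ?thesis using rho_ge_1 unfolding B_def by (intro mult_left_mono) auto
qed

lemma y_B_B_le: "exp (- t) * (y * B * B) \<le> 1 - exp (- t)"
proof -
  have "r * (2 * r + 2) * (2 * r + 2) \<le> (r + 1) * (2 * r + 1) * (2 * r + 1)"
    using r_ge_1 by (simp add: algebra_simps)
  then have rM: "r * M * M \<le> r + 1" using r_ge_1 by (simp add: M_def divide_simps)
  have "y * B * B \<le> x * \<rho> * M * B"
    using mult_right_mono[OF y_B_le B_nonneg] .
  also have "\<dots> = x * \<rho> * exp 1 * (r * M * M)" by (simp add: B_def \<rho>_def mult_ac)
  also have "\<dots> \<le> x * \<rho> * exp 1 * (r + 1)"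
    using rM x_nonneg rho_ge_1 by (intro mult_left_mono) auto
  also have "\<dots> \<le> t" using x_rho_small degree_pos by (simp add: t_def field_simps)
  finally have "exp (- t) * (y * B * B) \<le> exp (- t) * t" by simp
  also have "\<dots> \<le> 1 - exp (- t)"
    using exp_ge_add_one_self[of t] by (simp add: exp_minus field_simps)
  finally show ?thesis .
qed

lemma weight_exponent_le:
  assumes "d + 1 + c \<le> \<Delta> * k"
  shows "x ^ c * r ^ k * exp t ^ d \<le> exp (- t) * (y ^ c * \<rho> ^ k)"
proof -
  have "real (d + 1 + c) * t \<le> real (\<Delta> * k) * t"
    using assms t_pos by (intro mult_right_mono) (simp_all only: of_nat_le_iff less_imp_le)
  then have "real d * t \<le> real k - t - t * real c"
    using degree_pos by (simp add: t_def algebra_simps)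
  then have "exp t ^ d \<le> exp (- t) * exp (- t) ^ c * exp 1 ^ k"
    by (simp add: mult.commute flip: exp_of_nat_mult exp_add)
  then have "x ^ c * r ^ k * exp t ^ d \<le> x ^ c * r ^ k * (exp (- t) * exp (- t) ^ c * exp 1 ^ k)"
    using x_nonneg r_ge_1 by (intro mult_left_mono) auto
  then show ?thesis by (simp add: y_def \<rho>_def power_mult_distrib mult_ac)
qed

end

section \<open>Rooted edge sets\<close>

definition verts :: "('e \<Rightarrow> 'v set) \<Rightarrow> 'e set \<Rightarrow> 'v set" where
  "verts ends S = \<Union>(ends ` S)"

definition adjacent_in :: "('e \<Rightarrow> 'v set) \<Rightarrow> 'e set \<Rightarrow> 'v \<Rightarrow> 'v \<Rightarrow> bool" where
  "adjacent_in ends S p q \<longleftrightarrow> (\<exists>g\<in>S. p \<in> ends g \<and> q \<in> ends g)"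

abbreviation reachable_in :: "('e \<Rightarrow> 'v set) \<Rightarrow> 'e set \<Rightarrow> 'v \<Rightarrow> 'v \<Rightarrow> bool" where
  "reachable_in ends S \<equiv> (adjacent_in ends S)\<^sup>*\<^sup>*"

definition rooted_at :: "('e \<Rightarrow> 'v set) \<Rightarrow> 'e set \<Rightarrow> 'v \<Rightarrow> bool" where
  "rooted_at ends R v \<longleftrightarrow> (\<forall>g\<in>R. \<exists>p\<in>ends g. reachable_in ends R v p)"

definition component_at :: "('e \<Rightarrow> 'v set) \<Rightarrow> 'e set \<Rightarrow> 'v \<Rightarrow> 'e set" where
  "component_at ends S v = {g\<in>S. \<exists>p\<in>ends g. reachable_in ends S v p}"

definition rooted_subsets :: "('e \<Rightarrow> 'v set) \<Rightarrow> 'e set \<Rightarrow> 'v \<Rightarrow> 'e set set" where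
  "rooted_subsets ends A v = {R. R \<subseteq> A \<and> rooted_at ends R v}"

definition incident_edges :: "('e \<Rightarrow> 'v set) \<Rightarrow> 'e set \<Rightarrow> 'e set" where
  "incident_edges ends C = {g. ends g \<inter> verts ends C \<noteq> {}}"

definition cluster_weight :: "('e \<Rightarrow> 'v set) \<Rightarrow> real \<Rightarrow> real \<Rightarrow> 'v \<Rightarrow> 'e set \<Rightarrow> real" where
  "cluster_weight ends y \<rho> v R = y ^ card R * \<rho> ^ card (insert v (verts ends R))"

lemma reachable_in_mono:
  assumes "reachable_in ends S p q" "S \<subseteq> T"
  shows "reachable_in ends T p q"
proof -
  have "adjacent_in ends S \<le> adjacent_in ends T"
    using assms(2) unfolding adjacent_in_def le_fun_def le_bool_def by blast
  then show ?thesis using assms(1) rtranclp_mono by (metis predicate2D)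
qed

lemma component_at_subset: "component_at ends S v \<subseteq> S"
  by (auto simp: component_at_def)

lemma reachable_in_component_at:
  "reachable_in ends S v q \<Longrightarrow> reachable_in ends (component_at ends S v) v q"
proof (induction rule: rtranclp_induct)
  case (step q r)
  then obtain g where g: "g \<in> S" "q \<in> ends g" "r \<in> ends g" by (auto simp: adjacent_in_def)
  then have "g \<in> component_at ends S v" using step.hyps(1) by (auto simp: component_at_def)
  then have "adjacent_in ends (component_at ends S v) q r" using g by (auto simp: adjacent_in_def)
  then show ?case using step.IH by (meson rtranclp.rtrancl_into_rtrancl)
qed simp

lemma rooted_at_component_at: "rooted_at ends (component_at ends S v) v"
  unfolding rooted_at_def using reachable_in_component_at by (fastforce simp: component_at_def)

lemma rooted_at_root_edge:
  assumes "rooted_at ends R v" "g \<in> R"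
  shows "\<exists>h\<in>R. v \<in> ends h"
proof -
  obtain p where p: "p \<in> ends g" "reachable_in ends R v p" using assms by (auto simp: rooted_at_def)
  from p(2) show ?thesis
  proof (cases rule: converse_rtranclpE)
    case base then show ?thesis using p assms by auto
  next
    case (step q) then show ?thesis by (auto simp: adjacent_in_def)
  qed
qed

lemma reachable_in_remove_edge:
  assumes e: "e \<in> R" "ends e = {v,u}"
  shows "reachable_in ends R v q \<Longrightarrow> reachable_in ends (R - {e}) v q
     \<or> reachable_in ends (R - {e} - component_at ends (R - {e}) v) u q"
proof (induction rule: rtranclp_induct)
  case (step q r)
  let ?R1 = "component_at ends (R - {e}) v" and ?R2 = "R - {e} - component_at ends (R - {e}) v"
  obtain g where g: "g \<in> R" "q \<in> ends g" "r \<in> ends g" using step.hyps(2) by (auto simp: adjacent_in_def)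
  show ?case
  proof (cases "g = e")
    case True then show ?thesis using g e by auto
  next
    case ne: False
    show ?thesis
    proof (cases "reachable_in ends (R - {e}) v q")
      case True
      have "adjacent_in ends (R - {e}) q r" using g ne by (auto simp: adjacent_in_def)
      then show ?thesis using True by (meson rtranclp.rtrancl_into_rtrancl)
    next
      case False
      then have q2: "reachable_in ends ?R2 u q" using step.IH by simp
      show ?thesis
      proof (cases "g \<in> ?R1")
        case True
        then obtain p where p: "p \<in> ends g" "reachable_in ends (R - {e}) v p"
          by (auto simp: component_at_def)
        have "adjacent_in ends (R - {e}) p q" using p g ne by (auto simp: adjacent_in_def)
        then show ?thesis using p(2) False by (meson rtranclp.rtrancl_into_rtrancl)
      next
        case False
        have "adjacent_in ends ?R2 q r" using g ne False by (auto simp: adjacent_in_def)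
        then show ?thesis using q2 by (meson rtranclp.rtrancl_into_rtrancl)
      qed
    qed
  qed
qed simp

lemma rooted_at_remainder:
  assumes "rooted_at ends R v" "e \<in> R" "ends e = {v,u}"
  shows "rooted_at ends (R - {e} - component_at ends (R - {e}) v) u"
  unfolding rooted_at_def
proof
  fix g assume g: "g \<in> R - {e} - component_at ends (R - {e}) v"
  then obtain p where p: "p \<in> ends g" "reachable_in ends R v p"
    using assms(1) by (auto simp: rooted_at_def)
  have "\<not> reachable_in ends (R - {e}) v p" using g p(1) by (auto simp: component_at_def)
  then show "\<exists>p\<in>ends g. reachable_in ends (R - {e} - component_at ends (R - {e}) v) u p"
    using reachable_in_remove_edge[OF assms(2,3) p(2)] p(1) by blast
qed

lemma finite_rooted_subsets: "finite A \<Longrightarrow> finite (rooted_subsets ends A v)"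
  by (rule finite_subset[of _ "Pow A"]) (auto simp: rooted_subsets_def)

lemma cluster_weight_nonneg: "y \<ge> 0 \<Longrightarrow> \<rho> \<ge> 0 \<Longrightarrow> cluster_weight ends y \<rho> v R \<ge> 0"
  by (simp add: cluster_weight_def)

lemma cluster_weight_split_le:
  assumes R: "finite R" "\<forall>g\<in>R. finite (ends g)" "e \<in> R" "ends e = {v,u}"
    and R1: "R1 \<subseteq> R - {e}" and y: "y \<ge> 0" and \<rho>: "\<rho> \<ge> 1"
  shows "cluster_weight ends y \<rho> v R
    \<le> y * (cluster_weight ends y \<rho> v R1 * cluster_weight ends y \<rho> u (R - {e} - R1))"
proof -
  define R2 where "R2 = R - {e} - R1"
  have fin: "finite R1" "finite R2" using R(1) R1 finite_subset by (auto simp: R2_def)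
  have disj: "R1 \<inter> R2 = {}" "e \<notin> R1 \<union> R2" using R1 by (auto simp: R2_def)
  have "card R = card (insert e (R1 \<union> R2))"
    using R(3) R1 by (intro arg_cong[where f = card]) (auto simp: R2_def)
  also have "\<dots> = Suc (card R1 + card R2)"
    using fin disj by (simp add: card_Un_disjoint)
  finally have card_R: "card R = Suc (card R1 + card R2)" .
  have "insert v (verts ends R) \<subseteq> insert v (verts ends R1) \<union> insert u (verts ends R2)"
    using R(3,4) by (auto simp: verts_def R2_def)
  moreover have "finite (insert v (verts ends R1))" "finite (insert u (verts ends R2))"
    using fin R(2) R1 by (auto simp: verts_def R2_def)
  ultimately have "card (insert v (verts ends R))
      \<le> card (insert v (verts ends R1)) + card (insert u (verts ends R2))"
    by (meson card_Un_le card_mono finite_UnI le_trans)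
  then have "\<rho> ^ card (insert v (verts ends R))
      \<le> \<rho> ^ card (insert v (verts ends R1)) * \<rho> ^ card (insert u (verts ends R2))"
    using \<rho> by (simp add: power_add[symmetric] power_increasing)
  then have "y * (y ^ card R1 * y ^ card R2) * \<rho> ^ card (insert v (verts ends R))
      \<le> y * (y ^ card R1 * y ^ card R2)
          * (\<rho> ^ card (insert v (verts ends R1)) * \<rho> ^ card (insert u (verts ends R2)))"
    using y by (intro mult_left_mono) auto
  then show ?thesis by (simp add: cluster_weight_def card_R R2_def[symmetric] power_add mult_ac)
qed

lemma sum_cluster_weight_through_edge_le:
  assumes A: "finite A" "\<forall>g\<in>A. finite (ends g)" "e \<in> A" "ends e = {v,u}"
    and y: "y \<ge> 0" and \<rho>: "\<rho> \<ge> 1"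
  shows "sum (cluster_weight ends y \<rho> v) {R \<in> rooted_subsets ends A v. e \<in> R}
    \<le> y * (sum (cluster_weight ends y \<rho> v) (rooted_subsets ends (A - {e}) v)
             * sum (cluster_weight ends y \<rho> u) (rooted_subsets ends (A - {e}) u))"
proof -
  let ?T = "rooted_subsets ends (A - {e}) v \<times> rooted_subsets ends (A - {e}) u"
  let ?w = "\<lambda>(R1, R2). y * (cluster_weight ends y \<rho> v R1 * cluster_weight ends y \<rho> u R2)"
  have "sum (cluster_weight ends y \<rho> v) {R \<in> rooted_subsets ends A v. e \<in> R} \<le> sum ?w ?T"
  proof (rule sum_le_included[where i = "\<lambda>(R1, R2). insert e (R1 \<union> R2)"])
    show "finite {R \<in> rooted_subsets ends A v. e \<in> R}" "finite ?T"
      using A(1) by (simp_all add: finite_rooted_subsets)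
    show "\<forall>p\<in>?T. 0 \<le> ?w p"
      using y \<rho> by (auto intro!: mult_nonneg_nonneg cluster_weight_nonneg)
    show "\<forall>R\<in>{R \<in> rooted_subsets ends A v. e \<in> R}.
        \<exists>p\<in>?T. (\<lambda>(R1, R2). insert e (R1 \<union> R2)) p = R \<and> cluster_weight ends y \<rho> v R \<le> ?w p"
    proof
      fix R assume R: "R \<in> {R \<in> rooted_subsets ends A v. e \<in> R}"
      define R1 where "R1 = component_at ends (R - {e}) v"
      have RA: "R \<subseteq> A" "rooted_at ends R v" "e \<in> R" using R by (auto simp: rooted_subsets_def)
      have R1_sub: "R1 \<subseteq> R - {e}" unfolding R1_def by (rule component_at_subset)
      have fin: "finite R" "\<forall>g\<in>R. finite (ends g)" using RA(1) A(1,2) finite_subset by auto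
      have "(R1, R - {e} - R1) \<in> ?T"
        using RA R1_sub rooted_at_component_at[of ends "R - {e}" v]
          rooted_at_remainder[OF RA(2,3) A(4)]
        by (auto simp: rooted_subsets_def R1_def)
      moreover have "insert e (R1 \<union> (R - {e} - R1)) = R" using R1_sub RA(3) by auto
      moreover have "cluster_weight ends y \<rho> v R \<le> ?w (R1, R - {e} - R1)"
        using cluster_weight_split_le[of R ends e v u R1 y \<rho>] fin RA(3) A(4) R1_sub y \<rho> by simp
      ultimately show "\<exists>p\<in>?T. (\<lambda>(R1, R2). insert e (R1 \<union> R2)) p = R
          \<and> cluster_weight ends y \<rho> v R \<le> ?w p"
        by blast
    qed
  qed
  also have "sum ?w ?T
      = y * (\<Sum>p\<in>?T. cluster_weight ends y \<rho> v (fst p) * cluster_weight ends y \<rho> u (snd p))"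
    by (simp add: sum_distrib_left case_prod_unfold)
  also have "(\<Sum>p\<in>?T. cluster_weight ends y \<rho> v (fst p) * cluster_weight ends y \<rho> u (snd p))
      = sum (cluster_weight ends y \<rho> v) (rooted_subsets ends (A - {e}) v)
        * sum (cluster_weight ends y \<rho> u) (rooted_subsets ends (A - {e}) u)"
    by (simp add: sum.cartesian_product' sum_product)
  finally show ?thesis .
qed

lemma card2_obtain_other:
  assumes "card S = 2" "v \<in> S"
  obtains u where "S = {v, u}" "u \<noteq> v"
  using assms by (metis card_2_iff doubleton_eq_iff insertE singletonD)

lemma rooted_subsets_no_root_edge:
  assumes "\<forall>e\<in>A. v \<notin> ends e"
  shows "rooted_subsets ends A v = {{}}"
proof -
  have "R = {}" if "R \<in> rooted_subsets ends A v" for R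
    using that rooted_at_root_edge[of ends R v] assms by (auto simp: rooted_subsets_def)
  then show ?thesis by (auto simp: rooted_subsets_def rooted_at_def)
qed

lemma sum_rooted_subsets_remove_edge:
  assumes "finite A"
  shows "sum f (rooted_subsets ends A v)
    = sum f (rooted_subsets ends (A - {e}) v) + sum f {R \<in> rooted_subsets ends A v. e \<in> R}"
proof -
  have "rooted_subsets ends A v
      = rooted_subsets ends (A - {e}) v \<union> {R \<in> rooted_subsets ends A v. e \<in> R}"
    by (auto simp: rooted_subsets_def)
  then have "sum f (rooted_subsets ends A v)
      = sum f (rooted_subsets ends (A - {e}) v \<union> {R \<in> rooted_subsets ends A v. e \<in> R})"
    by (rule arg_cong)
  also have "\<dots> = sum f (rooted_subsets ends (A - {e}) v) + sum f {R \<in> rooted_subsets ends A v. e \<in> R}"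
    using assms by (intro sum.union_disjoint) (auto simp: finite_rooted_subsets rooted_subsets_def)
  finally show ?thesis .
qed

lemma sum_cluster_weight_le:
  assumes A: "finite A" "\<forall>g\<in>A. card (ends g) = 2" "\<forall>p. card {g\<in>A. p \<in> ends g} \<le> \<Delta>"
    and y: "y \<ge> 0" and \<rho>: "\<rho> \<ge> 1" and B: "B \<ge> 0" and fixed_point: "\<rho> * (1 + y * B) ^ \<Delta> \<le> B"
  shows "sum (cluster_weight ends y \<rho> v) (rooted_subsets ends A v)
    \<le> \<rho> * (1 + y * B) ^ card {g\<in>A. v \<in> ends g}"
  using A
proof (induction "card A" arbitrary: A v rule: less_induct)
  case less
  let ?q = "1 + y * B"
  show ?case
  proof (cases "\<exists>e\<in>A. v \<in> ends e")
    case False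
    then have "rooted_subsets ends A v = {{}}" "{g\<in>A. v \<in> ends g} = {}"
      by (auto simp: rooted_subsets_no_root_edge)
    then show ?thesis by (simp only:) (simp add: cluster_weight_def verts_def)
  next
    case True
    then obtain e where e: "e \<in> A" "v \<in> ends e" by blast
    then obtain u where u: "ends e = {v, u}" using less.prems(2) card2_obtain_other by metis
    have card_less: "card (A - {e}) < card A" using e less.prems(1) by (meson card_Diff1_less)
    have deg: "card {g\<in>A - {e}. p \<in> ends g} \<le> \<Delta>" for p
    proof -
      have "card {g\<in>A - {e}. p \<in> ends g} \<le> card {g\<in>A. p \<in> ends g}"
        using less.prems(1) by (intro card_mono) auto
      then show ?thesis using less.prems(3) le_trans by blast
    qed
    have IH: "sum (cluster_weight ends y \<rho> w) (rooted_subsets ends (A - {e}) w)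
        \<le> \<rho> * ?q ^ card {g\<in>A - {e}. w \<in> ends g}" for w
      using less.prems deg by (intro less.hyps[OF card_less]) auto
    have "\<rho> * ?q ^ card {g\<in>A - {e}. u \<in> ends g} \<le> \<rho> * ?q ^ \<Delta>"
      using deg[of u] \<rho> y B by (intro mult_left_mono power_increasing) auto
    then have "sum (cluster_weight ends y \<rho> u) (rooted_subsets ends (A - {e}) u) \<le> \<rho> * ?q ^ \<Delta>"
      using IH[of u] by linarith
    then have IH_u: "sum (cluster_weight ends y \<rho> u) (rooted_subsets ends (A - {e}) u) \<le> B"
      using fixed_point by linarith
    have "sum (cluster_weight ends y \<rho> v) (rooted_subsets ends A v)
        = sum (cluster_weight ends y \<rho> v) (rooted_subsets ends (A - {e}) v)
          + sum (cluster_weight ends y \<rho> v) {R \<in> rooted_subsets ends A v. e \<in> R}"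
      using less.prems(1) by (rule sum_rooted_subsets_remove_edge)
    also have "\<dots> \<le> \<rho> * ?q ^ card {g\<in>A - {e}. v \<in> ends g}
        + y * (\<rho> * ?q ^ card {g\<in>A - {e}. v \<in> ends g} * B)"
    proof (rule add_mono[OF IH])
      have fin_ends: "\<forall>g\<in>A. finite (ends g)"
        using less.prems(2) by (metis card.infinite zero_neq_numeral)
      have "sum (cluster_weight ends y \<rho> v) {R \<in> rooted_subsets ends A v. e \<in> R}
          \<le> y * (sum (cluster_weight ends y \<rho> v) (rooted_subsets ends (A - {e}) v)
                 * sum (cluster_weight ends y \<rho> u) (rooted_subsets ends (A - {e}) u))"
        by (rule sum_cluster_weight_through_edge_le[OF less.prems(1) fin_ends e(1) u y \<rho>])
      also have "\<dots> \<le> y * (\<rho> * ?q ^ card {g\<in>A - {e}. v \<in> ends g} * B)"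
        using IH[of v] IH_u y \<rho> B
        by (intro mult_left_mono mult_mono) (auto intro!: sum_nonneg cluster_weight_nonneg)
      finally show "sum (cluster_weight ends y \<rho> v) {R \<in> rooted_subsets ends A v. e \<in> R}
          \<le> y * (\<rho> * ?q ^ card {g\<in>A - {e}. v \<in> ends g} * B)" .
    qed
    also have "{g\<in>A. v \<in> ends g} = insert e {g\<in>A - {e}. v \<in> ends g}" using e by auto
    then have "\<rho> * ?q ^ card {g\<in>A - {e}. v \<in> ends g} + y * (\<rho> * ?q ^ card {g\<in>A - {e}. v \<in> ends g} * B)
        = \<rho> * ?q ^ card {g\<in>A. v \<in> ends g}"
      using less.prems(1) by (simp add: algebra_simps)
    finally show ?thesis .
  qed
qed

lemma subset_incident_edges: "\<forall>g\<in>C. ends g \<noteq> {} \<Longrightarrow> C \<subseteq> incident_edges ends C"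
  by (auto simp: incident_edges_def verts_def)

lemma component_at_Un_disjoint:
  assumes C: "rooted_at ends C u" "u \<in> verts ends C" and S: "S \<inter> incident_edges ends C = {}"
  shows "component_at ends (C \<union> S) u = C"
proof
  show "C \<subseteq> component_at ends (C \<union> S) u"
    using C(1) reachable_in_mono[of ends C u _ "C \<union> S"]
    by (fastforce simp: component_at_def rooted_at_def)
  have inv: "reachable_in ends (C \<union> S) u q \<Longrightarrow> q \<in> verts ends C" for q
  proof (induction rule: rtranclp_induct)
    case (step q r)
    then obtain g where g: "g \<in> C \<union> S" "q \<in> ends g" "r \<in> ends g" by (auto simp: adjacent_in_def)
    then have "g \<in> incident_edges ends C" using step.IH by (auto simp: incident_edges_def)
    then have "g \<in> C" using g(1) S by auto
    then show ?case using g(3) by (auto simp: verts_def)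
  qed (use C(2) in simp)
  show "component_at ends (C \<union> S) u \<subseteq> C"
  proof
    fix g assume "g \<in> component_at ends (C \<union> S) u"
    then obtain p where p: "g \<in> C \<union> S" "p \<in> ends g" "reachable_in ends (C \<union> S) u p"
      by (auto simp: component_at_def)
    then have "g \<in> incident_edges ends C" using inv by (auto simp: incident_edges_def)
    then show "g \<in> C" using p(1) S by auto
  qed
qed

lemma component_at_remainder_disjoint:
  "(S - component_at ends S u) \<inter> incident_edges ends (component_at ends S u) = {}"
proof (rule ccontr)
  let ?C = "component_at ends S u"
  assume "(S - ?C) \<inter> incident_edges ends ?C \<noteq> {}"
  then obtain g p h where g: "g \<in> S" "g \<notin> ?C" and ph: "p \<in> ends g" "h \<in> ?C" "p \<in> ends h"
    by (auto simp: incident_edges_def verts_def)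
  then obtain q where q: "q \<in> ends h" "reachable_in ends S u q" by (auto simp: component_at_def)
  have "adjacent_in ends S q p" using ph q(1) component_at_subset by (fastforce simp: adjacent_in_def)
  then have "reachable_in ends S u p" using q(2) by (meson rtranclp.rtrancl_into_rtrancl)
  then show False using g ph(1) by (auto simp: component_at_def)
qed

lemma bij_betw_rooted_cluster_split:
  assumes A: "\<forall>g\<in>A. ends g \<noteq> {}" and e: "e \<in> A" "u \<in> ends e"
  shows "bij_betw (\<lambda>(C, S). C \<union> S)
    (SIGMA C:{C \<in> rooted_subsets ends A u. e \<in> C}. Pow (A - incident_edges ends C))
    {S \<in> Pow A. e \<in> S}"
proof (rule bij_betw_byWitness[where f' = "\<lambda>S. (component_at ends S u, S - component_at ends S u)"])
  have C_inc: "C \<subseteq> incident_edges ends C" if "C \<subseteq> A" for C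
    using A that by (intro subset_incident_edges) auto
  have comp: "component_at ends (C \<union> S) u = C"
    if "C \<in> rooted_subsets ends A u" "e \<in> C" "S \<subseteq> A - incident_edges ends C" for C S
    using that e(2) by (intro component_at_Un_disjoint) (auto simp: rooted_subsets_def verts_def)
  show "\<forall>p \<in> (SIGMA C:{C \<in> rooted_subsets ends A u. e \<in> C}. Pow (A - incident_edges ends C)).
      (\<lambda>S. (component_at ends S u, S - component_at ends S u)) ((\<lambda>(C, S). C \<union> S) p) = p"
  proof
    fix p assume "p \<in> (SIGMA C:{C \<in> rooted_subsets ends A u. e \<in> C}. Pow (A - incident_edges ends C))"
    then obtain C S where p: "p = (C, S)" and C: "C \<in> rooted_subsets ends A u" "e \<in> C"
      and S: "S \<subseteq> A - incident_edges ends C" by auto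
    have "C \<subseteq> incident_edges ends C" using C(1) C_inc by (simp add: rooted_subsets_def)
    then have "C \<union> S - C = S" using S by blast
    then show "(\<lambda>S. (component_at ends S u, S - component_at ends S u)) ((\<lambda>(C, S). C \<union> S) p) = p"
      using comp[OF C S] by (simp add: p)
  qed
  show "\<forall>S \<in> {S \<in> Pow A. e \<in> S}.
      (\<lambda>(C, S). C \<union> S) (component_at ends S u, S - component_at ends S u) = S"
    using component_at_subset by fastforce
  show "(\<lambda>(C, S). C \<union> S) ` (SIGMA C:{C \<in> rooted_subsets ends A u. e \<in> C}. Pow (A - incident_edges ends C))
      \<subseteq> {S \<in> Pow A. e \<in> S}"
    by (auto simp: rooted_subsets_def)
  show "(\<lambda>S. (component_at ends S u, S - component_at ends S u)) ` {S \<in> Pow A. e \<in> S}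
      \<subseteq> (SIGMA C:{C \<in> rooted_subsets ends A u. e \<in> C}. Pow (A - incident_edges ends C))"
  proof safe
    fix S assume S: "S \<subseteq> A" "e \<in> S"
    let ?C = "component_at ends S u"
    show "?C \<in> rooted_subsets ends A u"
      using S component_at_subset[of ends S u] rooted_at_component_at[of ends S u]
      by (auto simp: rooted_subsets_def)
    show "e \<in> ?C" using S e(2) by (auto simp: component_at_def)
    fix g assume g: "g \<in> S" "g \<notin> ?C"
    show "g \<in> A" using g S by auto
    show "g \<in> incident_edges ends ?C \<Longrightarrow> False"
      using component_at_remainder_disjoint[of S ends u] g by blast
  qed
qed

lemma card_filter_eq_sum: "finite I \<Longrightarrow> card {g\<in>I. P g} = (\<Sum>g\<in>I. if P g then 1 else 0)"
  by (simp add: sum.inter_filter[symmetric])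

lemma card_incident_edges_le:
  assumes A: "finite A" "C \<subseteq> A" "\<forall>g\<in>A. card (ends g) = 2"
    and deg: "\<forall>p. card {g\<in>A. p \<in> ends g} \<le> \<Delta>"
  shows "card (A \<inter> incident_edges ends C) + card C \<le> \<Delta> * card (verts ends C)"
proof -
  \<comment> \<open>Double counting edge-vertex incidences between I and X: an edge of C has both ends in X,
    any other edge of I at least one.\<close>
  define I where "I = A \<inter> incident_edges ends C"
  define X where "X = verts ends C"
  have fin: "finite I" "finite X"
    using A finite_subset[OF A(2)] card.infinite by (fastforce simp: I_def X_def verts_def)+
  have "C \<subseteq> I" using A subset_incident_edges[of C ends] by (force simp: I_def)
  then have "{g\<in>I. g \<in> C} = C" by blast
  then have "card I + card C = card I + card {g\<in>I. g \<in> C}" by simp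
  also have "\<dots> = (\<Sum>g\<in>I. 1 + (if g \<in> C then 1 else 0))"
    unfolding sum.distrib card_filter_eq_sum[OF fin(1)] by simp
  also have "\<dots> = (\<Sum>g\<in>I. if g \<in> C then 2 else 1)" by (intro sum.cong) auto
  also have "\<dots> \<le> (\<Sum>g\<in>I. card {p\<in>X. p \<in> ends g})"
  proof (rule sum_mono)
    fix g assume g: "g \<in> I"
    show "(if g \<in> C then 2 else 1) \<le> card {p\<in>X. p \<in> ends g}"
    proof (cases "g \<in> C")
      case True
      then have "{p\<in>X. p \<in> ends g} = ends g" by (auto simp: X_def verts_def)
      then show ?thesis using True A(2,3) by auto
    next
      case False
      obtain p where "p \<in> ends g" "p \<in> X" using g by (auto simp: I_def X_def incident_edges_def)
      then have "{p\<in>X. p \<in> ends g} \<noteq> {}" by blast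
      then show ?thesis using False fin(2) by (simp add: Suc_leI card_gt_0_iff)
    qed
  qed
  also have "\<dots> = (\<Sum>p\<in>X. card {g\<in>I. p \<in> ends g})"
    using fin by (simp add: card_filter_eq_sum sum.swap[of _ I])
  also have "\<dots> \<le> (\<Sum>p\<in>X. \<Delta>)"
  proof (rule sum_mono)
    fix p
    have "card {g\<in>I. p \<in> ends g} \<le> card {g\<in>A. p \<in> ends g}"
      using A(1) by (intro card_mono) (auto simp: I_def)
    then show "card {g\<in>I. p \<in> ends g} \<le> \<Delta>" using deg le_trans by blast
  qed
  finally show ?thesis by (simp add: I_def X_def mult.commute)
qed

section \<open>Holant sums over edge subsets\<close>

lemma holomorphic_holant_Z: "holant_Z V E ends \<pi> holomorphic_on UNIV"
  unfolding holant_Z_def by (intro holomorphic_intros)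

locale holant_graph =
  fixes V :: "'v set" and E :: "('e::linorder) set" and ends :: "'e \<Rightarrow> 'v set"
    and \<pi> :: "'v \<Rightarrow> sig" and r1 :: real and \<Delta> :: nat
  assumes graph: "is_graph V E ends"
    and sig_at_zero: "\<forall>v\<in>V. sig_fun (\<pi> v) (replicate (card (edges_at E ends v)) False) = 1"
    and sig_bound: "\<forall>v\<in>V. \<forall>xs. length xs = card (edges_at E ends v)
      \<and> xs \<noteq> replicate (card (edges_at E ends v)) False \<longrightarrow> cmod (sig_fun (\<pi> v) xs) \<le> r1"
    and r1_ge_1: "r1 \<ge> 1"
    and degree_le: "\<forall>p. card (edges_at E ends p) \<le> \<Delta>"
begin

definition edge_list :: "'v \<Rightarrow> 'e list" where
  "edge_list v = sorted_list_of_set (edges_at E ends v)"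

definition sub_weight :: "'e set \<Rightarrow> complex \<Rightarrow> complex" where
  "sub_weight S w = (\<Prod>v\<in>V. sig_fun (\<pi> v) (map (\<lambda>g. g \<in> S) (edge_list v))) * w ^ card S"

definition Z_on :: "'e set \<Rightarrow> complex \<Rightarrow> complex" where
  "Z_on A w = (\<Sum>S\<in>Pow A. sub_weight S w)"

lemma finite_E: "finite E"
  using graph by (simp add: is_graph_def)

lemma ends_E: "g \<in> E \<Longrightarrow> ends g \<subseteq> V \<and> card (ends g) = 2"
  using graph by (simp add: is_graph_def)

lemma degree_subset_le:
  assumes "A \<subseteq> E"
  shows "card {g\<in>A. p \<in> ends g} \<le> \<Delta>"
proof -
  have "card {g\<in>A. p \<in> ends g} \<le> card (edges_at E ends p)"
    using assms finite_E by (intro card_mono) (auto simp: edges_at_def)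
  then show ?thesis using degree_le le_trans by blast
qed

lemma set_edge_list: "set (edge_list v) = edges_at E ends v"
  using finite_E by (simp add: edge_list_def edges_at_def)

lemma length_edge_list: "length (edge_list v) = card (edges_at E ends v)"
  by (simp add: edge_list_def)

lemma sig_value_outside:
  assumes "v \<in> V" "v \<notin> verts ends S"
  shows "sig_fun (\<pi> v) (map (\<lambda>g. g \<in> S) (edge_list v)) = 1"
proof -
  have "map (\<lambda>g. g \<in> S) (edge_list v) = map (\<lambda>_. False) (edge_list v)"
    using assms(2) set_edge_list by (intro map_cong) (auto simp: verts_def edges_at_def)
  then show ?thesis using assms(1) sig_at_zero by (simp add: map_replicate_const length_edge_list)
qed

lemma norm_sig_value_le:
  assumes "v \<in> V" "S \<subseteq> E"
  shows "cmod (sig_fun (\<pi> v) (map (\<lambda>g. g \<in> S) (edge_list v))) \<le> (if v \<in> verts ends S then r1 else 1)"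
proof (cases "v \<in> verts ends S")
  case True
  then obtain g where "g \<in> S" "v \<in> ends g" by (auto simp: verts_def)
  then have "True \<in> set (map (\<lambda>g. g \<in> S) (edge_list v))"
    using assms(2) set_edge_list by (force simp: edges_at_def)
  then have "map (\<lambda>g. g \<in> S) (edge_list v) \<noteq> replicate (card (edges_at E ends v)) False"
    by (metis in_set_replicate)
  then show ?thesis using True assms(1) sig_bound by (simp add: length_edge_list)
qed (use sig_value_outside[OF assms(1)] in simp)

lemma sub_weight_empty: "sub_weight {} w = 1"
  using sig_value_outside[of _ "{}"] by (simp add: sub_weight_def verts_def)

lemma Z_on_empty: "Z_on {} w = 1"
  by (simp add: Z_on_def sub_weight_empty)

lemma sub_weight_Un:
  assumes "S1 \<inter> S2 = {}" "finite S1" "finite S2" "verts ends S1 \<inter> verts ends S2 = {}"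
  shows "sub_weight (S1 \<union> S2) w = sub_weight S1 w * sub_weight S2 w"
proof -
  have factor: "sig_fun (\<pi> v) (map (\<lambda>g. g \<in> S1 \<union> S2) (edge_list v))
      = sig_fun (\<pi> v) (map (\<lambda>g. g \<in> S1) (edge_list v)) * sig_fun (\<pi> v) (map (\<lambda>g. g \<in> S2) (edge_list v))"
    if v: "v \<in> V" for v
  proof (cases "v \<in> verts ends S2")
    case True
    then have outside: "v \<notin> verts ends S1" using assms(4) by blast
    have "map (\<lambda>g. g \<in> S1 \<union> S2) (edge_list v) = map (\<lambda>g. g \<in> S2) (edge_list v)"
      using outside set_edge_list by (intro map_cong) (auto simp: verts_def edges_at_def)
    then show ?thesis by (simp only: sig_value_outside[OF v outside] mult_1_left)
  next
    case False
    have "map (\<lambda>g. g \<in> S1 \<union> S2) (edge_list v) = map (\<lambda>g. g \<in> S1) (edge_list v)"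
      using False set_edge_list by (intro map_cong) (auto simp: verts_def edges_at_def)
    then show ?thesis by (simp only: sig_value_outside[OF v False] mult_1_right)
  qed
  have "card (S1 \<union> S2) = card S1 + card S2" using assms by (simp add: card_Un_disjoint)
  then show ?thesis using factor by (simp add: sub_weight_def prod.distrib power_add mult_ac)
qed

lemma norm_sub_weight_le:
  assumes "C \<subseteq> E"
  shows "cmod (sub_weight C w) \<le> cmod w ^ card C * r1 ^ card (verts ends C)"
proof -
  have "cmod (\<Prod>v\<in>V. sig_fun (\<pi> v) (map (\<lambda>g. g \<in> C) (edge_list v)))
      \<le> (\<Prod>v\<in>V. if v \<in> verts ends C then r1 else 1)"
    unfolding prod_norm[symmetric] using norm_sig_value_le[OF _ assms] by (intro prod_mono) auto
  also have "\<dots> = r1 ^ card (V \<inter> verts ends C)"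
    using graph by (simp add: prod.If_cases is_graph_def Int_def)
  also have "V \<inter> verts ends C = verts ends C" using assms ends_E by (auto simp: verts_def)
  finally show ?thesis
    by (simp add: sub_weight_def norm_mult norm_power mult.commute mult_left_mono)
qed

lemma Z_on_remove_edge:
  assumes A: "A \<subseteq> E" "e \<in> A" "u \<in> ends e"
  shows "Z_on A w = Z_on (A - {e}) w
    + (\<Sum>C\<in>{C \<in> rooted_subsets ends A u. e \<in> C}. sub_weight C w * Z_on (A - incident_edges ends C) w)"
proof -
  let ?Cs = "{C \<in> rooted_subsets ends A u. e \<in> C}"
  let ?Sig = "SIGMA C:?Cs. Pow (A - incident_edges ends C)"
  have finA: "finite A" using A(1) finite_E finite_subset by blast
  have ends_ne: "\<forall>g\<in>A. ends g \<noteq> {}" using A(1) ends_E by fastforce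
  have "Pow A = Pow (A - {e}) \<union> {S \<in> Pow A. e \<in> S}" by auto
  then have "Z_on A w = (\<Sum>S\<in>Pow (A - {e}) \<union> {S \<in> Pow A. e \<in> S}. sub_weight S w)"
    unfolding Z_on_def by (rule arg_cong)
  also have "\<dots> = Z_on (A - {e}) w + (\<Sum>S\<in>{S \<in> Pow A. e \<in> S}. sub_weight S w)"
    unfolding Z_on_def using finA by (intro sum.union_disjoint) auto
  also have "(\<Sum>S\<in>{S \<in> Pow A. e \<in> S}. sub_weight S w) = (\<Sum>p\<in>?Sig. sub_weight (fst p \<union> snd p) w)"
    using sum.reindex_bij_betw[OF bij_betw_rooted_cluster_split[OF ends_ne A(2,3)],
        of "\<lambda>S. sub_weight S w"]
    by (simp add: case_prod_unfold)
  also have "\<dots> = (\<Sum>p\<in>?Sig. sub_weight (fst p) w * sub_weight (snd p) w)"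
  proof (rule sum.cong[OF refl])
    fix p assume "p \<in> ?Sig"
    then obtain C S where p: "p = (C, S)" and C: "C \<in> ?Cs" and S: "S \<subseteq> A - incident_edges ends C"
      by auto
    have "C \<subseteq> A" using C by (simp add: rooted_subsets_def)
    then have "C \<subseteq> incident_edges ends C" using ends_ne by (intro subset_incident_edges) auto
    then show "sub_weight (fst p \<union> snd p) w = sub_weight (fst p) w * sub_weight (snd p) w"
      unfolding p fst_conv snd_conv using S \<open>C \<subseteq> A\<close> finA by (intro sub_weight_Un)
        (auto simp: incident_edges_def verts_def intro: finite_subset)
  qed
  also have "\<dots> = (\<Sum>C\<in>?Cs. \<Sum>S\<in>Pow (A - incident_edges ends C). sub_weight C w * sub_weight S w)"
    using finA by (subst sum.Sigma) (auto simp: finite_rooted_subsets case_prod_unfold)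
  also have "\<dots> = (\<Sum>C\<in>?Cs. sub_weight C w * Z_on (A - incident_edges ends C) w)"
    by (simp add: Z_on_def sum_distrib_left)
  finally show ?thesis .
qed

lemma holant_Z_eq_Z_on: "holant_Z V E ends \<pi> w = Z_on E w"
  unfolding holant_Z_def Z_on_def
proof (rule sum.reindex_bij_witness[where i = "\<lambda>S. restrict (\<lambda>e. e \<in> S) E" and j = "\<lambda>\<sigma>. {e\<in>E. \<sigma> e}"])
  fix \<sigma> :: "'e \<Rightarrow> bool" assume \<sigma>: "\<sigma> \<in> PiE E (\<lambda>_. UNIV)"
  then show "restrict (\<lambda>e. e \<in> {e\<in>E. \<sigma> e}) E = \<sigma>"
    by (auto simp: restrict_def PiE_def extensional_def)
  show "{e\<in>E. \<sigma> e} \<in> Pow E" by auto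
  have restrict: "map (\<lambda>g. g \<in> {e\<in>E. \<sigma> e}) (edge_list v) = map \<sigma> (edge_list v)" for v
    using set_edge_list by (intro map_cong) (auto simp: edges_at_def)
  show "sub_weight {e\<in>E. \<sigma> e} w = (\<Prod>v\<in>V. sig_fun (\<pi> v)
      (map \<sigma> (sorted_list_of_set (edges_at E ends v)))) * w ^ card {e\<in>E. \<sigma> e}"
    unfolding sub_weight_def edge_list_def[symmetric] restrict ..
qed auto

lemma holant_Z_at_0: "holant_Z V E ends \<pi> 0 = 1"
proof -
  have "sub_weight S 0 = 0" if "S \<in> Pow E - {{}}" for S
    using that finite_E by (auto simp: sub_weight_def finite_subset)
  then have "Z_on E 0 = sub_weight {} 0"
    unfolding Z_on_def using finite_E by (subst sum.remove[of _ "{}"]) auto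
  then show ?thesis by (simp add: holant_Z_eq_Z_on sub_weight_empty)
qed

end

section \<open>Zero-freeness\<close>

locale holant_small = holant_graph V E ends \<pi> r1 \<Delta> + activity_bound "cmod w" r1 \<Delta>
  for V :: "'v set" and E :: "('e::linorder) set" and ends :: "'e \<Rightarrow> 'v set"
    and \<pi> :: "'v \<Rightarrow> sig" and r1 :: real and \<Delta> :: nat and w :: complex
begin

definition ratio_bounded :: "'e set \<Rightarrow> bool" where
  "ratio_bounded A \<longleftrightarrow> Z_on A w \<noteq> 0
     \<and> (\<forall>e\<in>A. cmod (Z_on (A - {e}) w) \<le> exp t * cmod (Z_on A w))"

lemma norm_Z_on_Diff_le:
  assumes "\<forall>A'\<subseteq>A. ratio_bounded A'" and "D \<subseteq> A" and "A \<subseteq> E"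
  shows "cmod (Z_on (A - D) w) \<le> exp t ^ card D * cmod (Z_on A w)"
proof -
  have "finite D" using assms(2,3) finite_E by (meson finite_subset)
  then show ?thesis using assms(2)
  proof (induction D rule: finite_induct)
    case (insert d D)
    have "cmod (Z_on (A - insert d D) w) = cmod (Z_on ((A - D) - {d}) w)"
      by (subst Diff_insert) (rule refl)
    also have "\<dots> \<le> exp t * cmod (Z_on (A - D) w)"
    proof -
      have "ratio_bounded (A - D)" using assms(1) by (simp add: Diff_subset)
      moreover have "d \<in> A - D" using insert.hyps(2) insert.prems by blast
      ultimately show ?thesis by (simp add: ratio_bounded_def)
    qed
    also have "\<dots> \<le> exp t * (exp t ^ card D * cmod (Z_on A w))"
      using insert.IH insert.prems by (intro mult_left_mono) auto
    finally show ?case using insert.hyps by simp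
  qed simp
qed

lemma norm_cluster_term_le:
  assumes A: "A \<subseteq> E" "e \<in> A" and u: "u \<in> ends e"
    and C: "C \<in> rooted_subsets ends A u" "e \<in> C"
    and IH: "\<forall>A'\<subseteq>A - {e}. ratio_bounded A'"
  shows "cmod (sub_weight C w * Z_on (A - incident_edges ends C) w)
    \<le> exp (- t) * cluster_weight ends y \<rho> u C * cmod (Z_on (A - {e}) w)"
proof -
  define D where "D = A \<inter> incident_edges ends C - {e}"
  have CA: "C \<subseteq> A" using C by (simp add: rooted_subsets_def)
  have finA: "finite A" using A(1) finite_E finite_subset by blast
  have "e \<in> A \<inter> incident_edges ends C" using A(2) C(2) u by (auto simp: incident_edges_def verts_def)
  then have D: "A - incident_edges ends C = (A - {e}) - D" "card D + 1 = card (A \<inter> incident_edges ends C)"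
    using finA card.remove[of "A \<inter> incident_edges ends C" e] by (auto simp: D_def)
  have "card D + 1 + card C \<le> \<Delta> * card (verts ends C)"
    unfolding D(2) using finA CA A(1) ends_E degree_subset_le by (intro card_incident_edges_le) auto
  moreover have "insert u (verts ends C) = verts ends C" using u C(2) by (auto simp: verts_def)
  ultimately have exponent: "cmod w ^ card C * r1 ^ card (verts ends C) * exp t ^ card D
      \<le> exp (- t) * cluster_weight ends y \<rho> u C"
    using weight_exponent_le by (simp add: cluster_weight_def)
  have "cmod (sub_weight C w * Z_on (A - incident_edges ends C) w)
      \<le> cmod w ^ card C * r1 ^ card (verts ends C) * (exp t ^ card D * cmod (Z_on (A - {e}) w))"
  proof -
    have "cmod (Z_on (A - {e} - D) w) \<le> exp t ^ card D * cmod (Z_on (A - {e}) w)"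
      using IH A(1) by (intro norm_Z_on_Diff_le) (auto simp: D_def)
    moreover have "cmod (sub_weight C w) \<le> cmod w ^ card C * r1 ^ card (verts ends C)"
      using CA A(1) by (intro norm_sub_weight_le) auto
    moreover have "0 \<le> cmod w ^ card C * r1 ^ card (verts ends C)" using r1_ge_1 by simp
    ultimately show ?thesis unfolding norm_mult D(1) by (intro mult_mono norm_ge_zero)
  qed
  also have "\<dots> \<le> exp (- t) * cluster_weight ends y \<rho> u C * cmod (Z_on (A - {e}) w)"
    using mult_right_mono[OF exponent norm_ge_zero[of "Z_on (A - {e}) w"]] by (simp add: mult.assoc)
  finally show ?thesis .
qed

lemma sum_cluster_weight_through_edge_le_B:
  assumes A: "A \<subseteq> E" "e \<in> A" "ends e = {u, u'}"
  shows "sum (cluster_weight ends y \<rho> u) {C \<in> rooted_subsets ends A u. e \<in> C} \<le> y * B * B"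
proof -
  have finA: "finite A" using A(1) finite_E by (meson finite_subset)
  have card2: "\<forall>g\<in>A - {e}. card (ends g) = 2" using A(1) ends_E by auto
  have degree: "\<forall>p. card {g\<in>A - {e}. p \<in> ends g} \<le> \<Delta>"
    using A(1) by (intro allI degree_subset_le) auto
  have bound: "sum (cluster_weight ends y \<rho> v) (rooted_subsets ends (A - {e}) v) \<le> B" for v
  proof -
    have "sum (cluster_weight ends y \<rho> v) (rooted_subsets ends (A - {e}) v)
        \<le> \<rho> * (1 + y * B) ^ card {g\<in>A - {e}. v \<in> ends g}"
      using finA card2 degree y_nonneg rho_ge_1 B_nonneg B_fixed_point
      by (intro sum_cluster_weight_le) auto
    also have "\<dots> \<le> \<rho> * (1 + y * B) ^ \<Delta>"
      using degree rho_ge_1 y_nonneg B_nonneg by (intro mult_left_mono power_increasing) auto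
    finally show ?thesis using B_fixed_point by linarith
  qed
  have "\<forall>g\<in>A. finite (ends g)" using A(1) ends_E finite_subset[OF _ finite_E] card.infinite
    by (metis subsetD zero_neq_numeral)
  then have "sum (cluster_weight ends y \<rho> u) {C \<in> rooted_subsets ends A u. e \<in> C}
      \<le> y * (sum (cluster_weight ends y \<rho> u) (rooted_subsets ends (A - {e}) u)
             * sum (cluster_weight ends y \<rho> u') (rooted_subsets ends (A - {e}) u'))"
    using A y_nonneg rho_ge_1 finA by (intro sum_cluster_weight_through_edge_le) auto
  also have "\<dots> \<le> y * (B * B)"
    using bound y_nonneg B_nonneg rho_ge_1
    by (intro mult_left_mono mult_mono) (auto intro!: sum_nonneg cluster_weight_nonneg)
  finally show ?thesis by (simp add: mult.assoc)
qed

lemma norm_Z_on_remove_le: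
  assumes A: "A \<subseteq> E" "e \<in> A" and IH: "\<forall>A'\<subseteq>A - {e}. ratio_bounded A'"
  shows "cmod (Z_on (A - {e}) w) \<le> exp t * cmod (Z_on A w)"
proof -
  obtain u u' where u: "ends e = {u, u'}" using A ends_E card_2_iff by (metis subsetD)
  let ?Cs = "{C \<in> rooted_subsets ends A u. e \<in> C}"
  let ?S = "\<Sum>C\<in>?Cs. sub_weight C w * Z_on (A - incident_edges ends C) w"
  let ?z = "cmod (Z_on (A - {e}) w)"
  have "cmod ?S \<le> (\<Sum>C\<in>?Cs. cmod (sub_weight C w * Z_on (A - incident_edges ends C) w))"
    by (rule norm_sum)
  also have "\<dots> \<le> (\<Sum>C\<in>?Cs. exp (- t) * cluster_weight ends y \<rho> u C * ?z)"
  proof (rule sum_mono)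
    fix C assume "C \<in> ?Cs"
    then show "cmod (sub_weight C w * Z_on (A - incident_edges ends C) w)
        \<le> exp (- t) * cluster_weight ends y \<rho> u C * ?z"
      using norm_cluster_term_le[OF A _ _ _ IH, of u C] u by auto
  qed
  also have "\<dots> = exp (- t) * ?z * sum (cluster_weight ends y \<rho> u) ?Cs"
    by (simp add: sum_distrib_left sum_distrib_right mult_ac)
  also have "\<dots> \<le> exp (- t) * ?z * (y * B * B)"
    using sum_cluster_weight_through_edge_le_B[OF A u] by (intro mult_left_mono) auto
  also have "\<dots> \<le> (1 - exp (- t)) * ?z"
    using mult_right_mono[OF y_B_B_le norm_ge_zero[of "Z_on (A - {e}) w"]] by (simp add: mult_ac)
  finally have "cmod ?S \<le> (1 - exp (- t)) * ?z" .
  moreover have "?z \<le> cmod (Z_on A w) + cmod ?S"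
    using Z_on_remove_edge[OF A, of u w] u norm_triangle_ineq4[of "Z_on A w" ?S]
    by (simp add: algebra_simps)
  ultimately have "exp (- t) * ?z \<le> cmod (Z_on A w)" by (simp add: algebra_simps)
  have "?z = exp t * (exp (- t) * ?z)" by (simp add: mult.assoc[symmetric] exp_minus_inverse)
  also have "\<dots> \<le> exp t * cmod (Z_on A w)"
    using \<open>exp (- t) * ?z \<le> cmod (Z_on A w)\<close> by (intro mult_left_mono) auto
  finally show ?thesis .
qed

lemma ratio_bounded_if_subset: "A \<subseteq> E \<Longrightarrow> ratio_bounded A"
proof (induction "card A" arbitrary: A rule: less_induct)
  case less
  have finA: "finite A" using less.prems finite_E by (meson finite_subset)
  have IH: "\<forall>A'\<subseteq>A - {e}. ratio_bounded A'" if "e \<in> A" for e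
  proof (intro allI impI)
    fix A' assume A': "A' \<subseteq> A - {e}"
    then have "card A' < card A"
      using that finA by (meson card_Diff1_less card_mono finite_Diff le_less_trans)
    then show "ratio_bounded A'" using less.hyps less.prems A' by blast
  qed
  have remove: "cmod (Z_on (A - {e}) w) \<le> exp t * cmod (Z_on A w)" if "e \<in> A" for e
    using norm_Z_on_remove_le[OF less.prems that IH[OF that]] .
  show ?case
  proof (cases "A = {}")
    case False
    then obtain e where e: "e \<in> A" by blast
    then have "Z_on (A - {e}) w \<noteq> 0" using IH[OF e] by (simp add: ratio_bounded_def)
    then have "Z_on A w \<noteq> 0" using remove[OF e] by auto
    then show ?thesis using remove by (simp add: ratio_bounded_def)
  qed (simp add: ratio_bounded_def Z_on_empty)
qed

end

lemma (in holant_graph) holant_Z_nonzero: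
  assumes small: "cmod w * (real \<Delta> * exp 2 * r1 * (r1 + 1)) \<le> 1"
  shows "holant_Z V E ends \<pi> w \<noteq> 0"
proof (cases "\<Delta> = 0")
  case True
  have "E = {}"
  proof (rule ccontr)
    assume "E \<noteq> {}"
    then obtain g p where g: "g \<in> E" "p \<in> ends g" using ends_E by (metis card.empty ex_in_conv zero_neq_numeral)
    have "card {g\<in>E. p \<in> ends g} = 0" using degree_subset_le[of E p] True by simp
    then show False using g finite_E by auto
  qed
  then have "Z_on E w = Z_on {} w" by (rule arg_cong[where f = "\<lambda>A. Z_on A w"])
  then have "Z_on E w = 1" by (simp add: Z_on_empty)
  then show ?thesis by (simp add: holant_Z_eq_Z_on)
next
  case False
  interpret holant_small V E ends \<pi> r1 \<Delta> w
    using False r1_ge_1 small by unfold_locales auto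
  show ?thesis using ratio_bounded_if_subset[of E] by (simp add: holant_Z_eq_Z_on ratio_bounded_def)
qed

lemma norm_sig_fun_le_fam_r:
  assumes "finite F" "s \<in> F" "length xs = sig_arity s" "xs \<noteq> replicate (sig_arity s) False"
  shows "cmod (sig_fun s xs) \<le> fam_r F"
proof -
  have "finite {xs :: bool list. set xs \<subseteq> UNIV \<and> length xs = sig_arity s}"
    by (rule finite_lists_length_eq) simp
  then have "finite {cmod (sig_fun s x) | x. length x = sig_arity s \<and> x \<noteq> replicate (sig_arity s) False}"
    by (rule finite_subset[rotated, OF finite_imageI]) auto
  then have "cmod (sig_fun s xs) \<le> sig_r s" unfolding sig_r_def using assms(3,4) by (intro Max_ge) auto
  also have "sig_r s \<le> fam_r F" unfolding fam_r_def using assms(1,2) by (intro Max_ge) auto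
  finally show ?thesis .
qed

lemma card_edges_at_le_max_degree:
  assumes "is_graph V E ends"
  shows "card (edges_at E ends p) \<le> max_degree V E ends"
proof (cases "p \<in> V")
  case True
  then show ?thesis using assms unfolding max_degree_def by (intro Max_ge) (auto simp: is_graph_def)
next
  case False
  then have "edges_at E ends p = {}" using assms by (auto simp: is_graph_def edges_at_def)
  then show ?thesis by simp
qed

lemma holant_graph_of_signatures:
  assumes "is_graph V E ends" "finite F" "\<forall>f\<in>F. in_F1 f"
    and "\<forall>v\<in>V. \<pi> v \<in> F \<and> sig_arity (\<pi> v) = card (edges_at E ends v)"
  shows "holant_graph V E ends \<pi> (max 1 (fam_r F)) (max_degree V E ends)"
proof
  show "\<forall>v\<in>V. sig_fun (\<pi> v) (replicate (card (edges_at E ends v)) False) = 1"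
    using assms(3,4) by (metis in_F1_def)
  show "\<forall>v\<in>V. \<forall>xs. length xs = card (edges_at E ends v)
      \<and> xs \<noteq> replicate (card (edges_at E ends v)) False
      \<longrightarrow> cmod (sig_fun (\<pi> v) xs) \<le> max 1 (fam_r F)"
    using assms(2,4) norm_sig_fun_le_fam_r by (metis max.coboundedI2)
  show "\<forall>p. card (edges_at E ends p) \<le> max_degree V E ends"
    using card_edges_at_le_max_degree[OF assms(1)] by blast
qed (use assms(1) in auto)

theorem mainTheorem5:
  fixes V :: "'v set" and E :: "('e::linorder) set" and ends :: "'e \<Rightarrow> 'v set"
    and F :: "sig set" and \<pi> :: "'v \<Rightarrow> sig" and z :: complex
  assumes "is_graph V E ends"
    and "finite F" and "\<forall>f\<in>F. in_F1 f"
    and "\<forall>v\<in>V. \<pi> v \<in> F \<and> sig_arity (\<pi> v) = card (edges_at E ends v)"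
    and "cmod z * (real (max_degree V E ends) * exp 2
            * max 1 (fam_r F) * (max 1 (fam_r F) + 1)) \<le> 1"
  shows "holant_Z V E ends \<pi> z \<noteq> 0
    \<and> summable (\<lambda>n. cmod (log_taylor_coeff (holant_Z V E ends \<pi>) n * z ^ n))"
proof -
  interpret holant_graph V E ends \<pi> "max 1 (fam_r F)" "max_degree V E ends"
    using assms(1-4) by (rule holant_graph_of_signatures)
  have nonzero: "holant_Z V E ends \<pi> w \<noteq> 0" if "cmod w \<le> cmod z" for w
  proof (rule holant_Z_nonzero)
    have "0 \<le> real (max_degree V E ends) * exp 2 * max 1 (fam_r F) * (max 1 (fam_r F) + 1)"
      by simp
    then show "cmod w * (real (max_degree V E ends) * exp 2 * max 1 (fam_r F)
        * (max 1 (fam_r F) + 1)) \<le> 1"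
      using that assms(5) mult_right_mono order_trans by blast
  qed
  show ?thesis
    using nonzero[of z] summable_log_taylor_coeff[OF holomorphic_holant_Z holant_Z_at_0 nonzero]
    by simp
qed


end
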